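(* Let $A$ be a unital separable $C^*$-algebra and let $\alpha\in{\rm Aut}(A)$ be approximately inner. Suppose $\{p_j\}_{j\ge1}$ is a central sequence of projections in $A$. Then there exists a central sequence of partial isometries $\{w_j\}_{j\ge1}$ in $A$ such that $w_j^*w_j=p_j$ and $w_jw_j^*=\alpha(p_j)$ for all $j$.
   Context: An automorphism $\alpha$ of a unital $C^*$-algebra $A$ is approximately inner if there is a sequence of unitaries $u_n\in A$ with $\|u_n^*au_n-\alpha(a)\|\to0$ for all $a\in A$. A sequence $\{x_j\}$ in $A$ is central if $\|x_ja-ax_j\|\to0$ as $j\to\infty$ for every $a\in A$. *)

theory Defs
  imports "HOL-Analysis.Analysis"
begin

class unital_cstar_algebra = real_normed_algebra_1 + banach +
  fixes adj :: "'a \<Rightarrow> 'a"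
    and scaleC :: "complex \<Rightarrow> 'a \<Rightarrow> 'a"
  assumes scaleC_add_right: "scaleC c (x + y) = scaleC c x + scaleC c y"
    and scaleC_add_left: "scaleC (c + d) x = scaleC c x + scaleC d x"
    and scaleC_scaleC: "scaleC c (scaleC d x) = scaleC (c * d) x"
    and scaleC_one: "scaleC 1 x = x"
    and scaleR_scaleC: "scaleR r x = scaleC (complex_of_real r) x"
    and norm_scaleC: "norm (scaleC c x) = cmod c * norm x"
    and mult_scaleC_left: "scaleC c x * y = scaleC c (x * y)"
    and mult_scaleC_right: "x * scaleC c y = scaleC c (x * y)"
    and adj_adj: "adj (adj x) = x"
    and adj_add: "adj (x + y) = adj x + adj y"
    and adj_mult: "adj (x * y) = adj y * adj x"
    and adj_scaleC: "adj (scaleC c x) = scaleC (cnj c) (adj x)"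
    and cstar_identity: "norm (adj x * x) = (norm x)\<^sup>2"

definition separable_space :: "'a::metric_space itself \<Rightarrow> bool" where
  "separable_space _ \<longleftrightarrow> (\<exists>D::'a set. countable D \<and> closure D = UNIV)"

definition is_automorphism :: "('a::unital_cstar_algebra \<Rightarrow> 'a) \<Rightarrow> bool" where
  "is_automorphism \<alpha> \<longleftrightarrow> bij \<alpha>
     \<and> (\<forall>x y. \<alpha> (x + y) = \<alpha> x + \<alpha> y)
     \<and> (\<forall>x y. \<alpha> (x * y) = \<alpha> x * \<alpha> y)
     \<and> (\<forall>c x. \<alpha> (scaleC c x) = scaleC c (\<alpha> x))
     \<and> (\<forall>x. \<alpha> (adj x) = adj (\<alpha> x))"

definition unitary :: "'a::unital_cstar_algebra \<Rightarrow> bool" where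
  "unitary u \<longleftrightarrow> adj u * u = 1 \<and> u * adj u = 1"

definition approximately_inner :: "('a::unital_cstar_algebra \<Rightarrow> 'a) \<Rightarrow> bool" where
  "approximately_inner \<alpha> \<longleftrightarrow>
     (\<exists>u::nat \<Rightarrow> 'a. (\<forall>n. unitary (u n)) \<and>
        (\<forall>a. (\<lambda>n. norm (adj (u n) * a * u n - \<alpha> a)) \<longlonglongrightarrow> 0))"

definition projection :: "'a::unital_cstar_algebra \<Rightarrow> bool" where
  "projection p \<longleftrightarrow> adj p = p \<and> p * p = p"

definition partial_isometry :: "'a::unital_cstar_algebra \<Rightarrow> bool" where
  "partial_isometry w \<longleftrightarrow> projection (adj w * w)"

definition central_sequence :: "(nat \<Rightarrow> 'a::unital_cstar_algebra) \<Rightarrow> bool" where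
  "central_sequence x \<longleftrightarrow> (\<forall>a. (\<lambda>j. norm (x j * a - a * x j)) \<longlonglongrightarrow> 0)"

end

theory Submission
  imports Defs
begin

text \<open>Choose unitaries u_n with u_n^* a u_n \<rightarrow> \<alpha>(a). Along a slowly growing index m(j) the
  projection p_j almost commutes with u_m(j), and along a fast growing index n(j) the projection
  u_n(j)^* p_j u_n(j) is close to \<alpha>(p_j). Since both u_m(j) a u_m(j)^* and u_n(j) a u_n(j)^* tend to
  \<alpha>^-1(a), the partial isometry w0_j = u_n(j)^* p_j u_m(j) is asymptotically central. Its source
  projection u_m(j)^* p_j u_m(j) is close to p_j and its range projection is close to \<alpha>(p_j);
  composing w0_j with the canonical partial isometries f e (e f e)^-1/2 between close projections
  e, f yields exact partial isometries from p_j to \<alpha>(p_j) that differ from w0_j by a null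
  sequence.\<close>

lemma adj_zero [simp]: "adj (0::'a::unital_cstar_algebra) = 0"
  by (metis add_cancel_right_right adj_add)

lemma adj_minus: "adj (- x) = - adj (x::'a::unital_cstar_algebra)"
  by (metis add.right_inverse adj_add adj_zero minus_unique)

lemma adj_diff: "adj (x - y) = adj x - adj (y::'a::unital_cstar_algebra)"
  using adj_add[of x "- y"] by (simp add: adj_minus)

lemma adj_one [simp]: "adj (1::'a::unital_cstar_algebra) = 1"
  by (metis adj_adj adj_mult mult.right_neutral mult_1_left)

lemma adj_scaleR: "adj (scaleR r x) = scaleR r (adj (x::'a::unital_cstar_algebra))"
  by (simp add: scaleR_scaleC adj_scaleC)

lemma norm_adj [simp]: "norm (adj x) = norm (x::'a::unital_cstar_algebra)"
proof -
  have le: "norm y \<le> norm (adj y)" for y :: 'a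
  proof -
    have "(norm y)\<^sup>2 \<le> norm (adj y) * norm y"
      by (metis cstar_identity norm_mult_ineq)
    then show ?thesis
      by (cases "norm y = 0") (auto simp: power2_eq_square)
  qed
  show ?thesis
    using le[of x] le[of "adj x"] by (simp add: adj_adj)
qed

lemma continuous_on_adj: "continuous_on S (adj::'a::unital_cstar_algebra \<Rightarrow> 'a)"
  by (rule lipschitz_on_continuous_on[of 1])
    (auto intro!: lipschitz_onI simp: dist_norm adj_diff[symmetric])

lemma projection_norm_le_one: "projection p \<Longrightarrow> norm (p::'a::unital_cstar_algebra) \<le> 1"
proof -
  assume "projection p"
  then have "(norm p)\<^sup>2 = norm p" by (metis projection_def cstar_identity)
  then show ?thesis
    by (cases "norm p = 0") (auto simp: power2_eq_square)
qed

lemma partial_isometry_norm_le_one: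
  "partial_isometry w \<Longrightarrow> norm (w::'a::unital_cstar_algebra) \<le> 1"
proof -
  assume "partial_isometry w"
  then have "(norm w)\<^sup>2 \<le> 1\<^sup>2"
    by (simp add: partial_isometry_def projection_norm_le_one flip: cstar_identity)
  then show ?thesis by (rule power2_le_imp_le) simp
qed

lemma unitary_adj: "unitary u \<Longrightarrow> unitary (adj (u::'a::unital_cstar_algebra))"
  by (simp add: unitary_def adj_adj)

lemma unitary_partial_isometry: "unitary u \<Longrightarrow> partial_isometry (u::'a::unital_cstar_algebra)"
  by (simp add: unitary_def partial_isometry_def projection_def adj_mult adj_adj)

lemma norm_unitary_le_one: "unitary u \<Longrightarrow> norm (u::'a::unital_cstar_algebra) \<le> 1"
  by (simp add: partial_isometry_norm_le_one unitary_partial_isometry)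

lemma norm_triangle_3: "norm (a + b + c) \<le> norm a + norm b + norm (c::'a::real_normed_vector)"
  using norm_triangle_ineq[of "a + b" c] norm_triangle_ineq[of a b] by linarith

lemma norm_mult_left_le_one: "norm a \<le> 1 \<Longrightarrow> norm (a * b) \<le> norm (b::'a::real_normed_algebra)"
  by (meson mult_left_le_one_le norm_ge_zero norm_mult_ineq order_trans)

lemma norm_mult_right_le_one: "norm b \<le> 1 \<Longrightarrow> norm (a * b) \<le> norm (a::'a::real_normed_algebra)"
  by (meson mult_right_le_one_le norm_ge_zero norm_mult_ineq order_trans)

lemma projection_mult_cancel:
  assumes "projection (p::'a::unital_cstar_algebra)"
  shows "p * p = p" "p * (p * y) = p * y"
  using assms by (simp_all add: projection_def flip: mult.assoc)

lemma unitary_mult_cancel: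
  assumes "unitary (u::'a::unital_cstar_algebra)"
  shows "adj u * u = 1" "u * adj u = 1" "adj u * (u * y) = y" "u * (adj u * y) = y"
  using assms by (simp_all add: unitary_def flip: mult.assoc)

lemma projection_unitary_conj:
  fixes p u :: "'a::unital_cstar_algebra"
  assumes "projection p" "unitary u"
  shows "projection (adj u * p * u)"
  using assms projection_mult_cancel[OF assms(1)] unitary_mult_cancel[OF assms(2)]
  by (simp add: projection_def adj_mult adj_adj mult.assoc)

lemma partial_isometry_mult:
  fixes a b :: "'a::unital_cstar_algebra"
  assumes "adj b * b = a * adj a" "projection (adj a * a)" "projection (b * adj b)"
  shows "adj (b * a) * (b * a) = adj a * a" "(b * a) * adj (b * a) = b * adj b"
proof -
  have "adj (b * a) * (b * a) = (adj a * a) * (adj a * a)"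
    by (simp add: adj_mult mult.assoc assms(1) flip: mult.assoc[of "adj b" b a])
  then show "adj (b * a) * (b * a) = adj a * a"
    using assms(2) by (simp add: projection_def)
  have "(b * a) * adj (b * a) = (b * adj b) * (b * adj b)"
    by (simp add: adj_mult mult.assoc flip: mult.assoc[of a "adj a"] assms(1))
  then show "(b * a) * adj (b * a) = b * adj b"
    using assms(3) by (simp add: projection_def)
qed

text \<open>A fixed point k of this map commuting with h solves (e + k)^2 (e - h) = e, so e + k is
  the inverse square root of e - h in a corner e A e containing h.\<close>
definition inv_sqrt_iter :: "'a::real_normed_algebra \<Rightarrow> 'a \<Rightarrow> 'a" where
  "inv_sqrt_iter h k = scaleR (1/2) (h + k * h + k * h - k * k + k * k * h)"

lemma norm_inv_sqrt_iter_le: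
  fixes h k :: "'a::real_normed_algebra"
  assumes h: "norm h \<le> 1/16" and k: "norm k \<le> 1/8"
  shows "norm (inv_sqrt_iter h k) \<le> norm h / 2 + 33/256 * norm k"
proof -
  have "norm (h + k * h + k * h - k * k + k * k * h)
      \<le> norm h + norm (k * h) + norm (k * h) + norm (k * k) + norm (k * k * h)"
    by (smt (verit) norm_triangle_ineq norm_triangle_ineq4)
  also have "\<dots> \<le> norm h + norm k * (1/16) + norm k * (1/16) + norm k * (1/8) + norm k * (1/8) * (1/16)"
    by (intro add_mono order_refl order_trans[OF norm_mult_ineq] mult_mono h k
        order_trans[OF mult_right_mono[OF norm_mult_ineq]]) auto
  finally show ?thesis
    by (simp add: inv_sqrt_iter_def)
qed

lemma norm_inv_sqrt_iter_diff_le: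
  fixes h x y :: "'a::real_normed_algebra"
  assumes h: "norm h \<le> 1/16" and x: "norm x \<le> 1/8" and y: "norm y \<le> 1/8"
  shows "norm (inv_sqrt_iter h x - inv_sqrt_iter h y) \<le> 1/2 * norm (x - y)"
proof -
  have sq: "norm (x * x - y * y) \<le> 1/4 * norm (x - y)"
  proof -
    have "x * x - y * y = x * (x - y) + (x - y) * y"
      by (simp add: algebra_simps)
    then have "norm (x * x - y * y) \<le> norm x * norm (x - y) + norm (x - y) * norm y"
      by (metis norm_mult_ineq norm_triangle_le add_mono)
    also have "\<dots> \<le> 1/8 * norm (x - y) + norm (x - y) * (1/8)"
      by (intro add_mono mult_mono x y) auto
    finally show ?thesis by simp
  qed
  have "inv_sqrt_iter h x - inv_sqrt_iter h y
      = scaleR (1/2) ((x - y) * h + (x - y) * h - (x * x - y * y) + (x * x - y * y) * h)"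
    by (simp add: inv_sqrt_iter_def algebra_simps)
  then have "norm (inv_sqrt_iter h x - inv_sqrt_iter h y)
      = 1/2 * norm ((x - y) * h + (x - y) * h - (x * x - y * y) + (x * x - y * y) * h)"
    by simp
  also have "\<dots> \<le> 1/2 * (norm (x - y) * norm h + norm (x - y) * norm h + norm (x * x - y * y)
      + norm (x * x - y * y) * norm h)"
    by (intro mult_left_mono order_trans[OF norm_triangle_ineq] add_mono norm_mult_ineq
        order_trans[OF norm_triangle_ineq4] order_refl) auto
  also have "\<dots> \<le> 1/2 * (norm (x - y) * (1/16) + norm (x - y) * (1/16) + 1/4 * norm (x - y)
      + 1/4 * norm (x - y) * (1/16))"
    by (intro mult_left_mono add_mono mult_mono sq h order_refl) auto
  also have "\<dots> \<le> 1/2 * norm (x - y)"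
    by simp
  finally show ?thesis .
qed

lemma inv_sqrt_iter_fixpoint:
  fixes e h k :: "'a::real_normed_algebra"
  assumes fixed: "inv_sqrt_iter h k = k" and e: "e * e = e"
    and eh: "e * h = h" "h * e = h" and ek: "e * k = k" "k * e = k" and kh: "k * h = h * k"
  shows "(e + k) * (e - h) * (e + k) = e"
proof -
  have "k + k = h + k * h + k * h - k * k + k * k * h"
    using arg_cong[OF fixed, of "scaleR 2"] by (simp add: inv_sqrt_iter_def scaleR_2)
  moreover have "(e + k) * (e - h) * (e + k) = e + (k + k) - h - (k * h + k * h) + k * k - k * (k * h)"
    by (simp add: algebra_simps e eh ek mult.assoc kh) (metis kh mult.assoc)
  ultimately show ?thesis
    by (simp add: algebra_simps mult.assoc)
qed

lemma inv_sqrt_iter_corner_commutant: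
  fixes e h k :: "'a::unital_cstar_algebra"
  assumes h: "adj h = h" "e * h = h" "h * e = h"
    and k: "adj k = k" "e * k = k" "k * e = k" "k * h = h * k"
  shows "adj (inv_sqrt_iter h k) = inv_sqrt_iter h k" "e * inv_sqrt_iter h k = inv_sqrt_iter h k"
    "inv_sqrt_iter h k * e = inv_sqrt_iter h k" "inv_sqrt_iter h k * h = h * inv_sqrt_iter h k"
proof -
  have kh: "k * h * h = h * (k * h)" "k * k * h = h * (k * k)" "h * (k * k) * h = h * (h * (k * k))"
    by (metis k(4) mult.assoc)+
  show "adj (inv_sqrt_iter h k) = inv_sqrt_iter h k"
    by (simp add: inv_sqrt_iter_def adj_scaleR adj_add adj_diff adj_mult h k mult.assoc)
      (metis k(4) mult.assoc)
  show "e * inv_sqrt_iter h k = inv_sqrt_iter h k"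
    by (simp add: inv_sqrt_iter_def algebra_simps k h flip: mult.assoc)
  show "inv_sqrt_iter h k * e = inv_sqrt_iter h k"
    by (simp add: inv_sqrt_iter_def algebra_simps k h mult.assoc)
  show "inv_sqrt_iter h k * h = h * inv_sqrt_iter h k"
    by (simp only: inv_sqrt_iter_def mult_scaleR_left mult_scaleR_right distrib_left
        distrib_right left_diff_distrib right_diff_distrib kh)
qed

lemma exists_corner_inverse_sqrt:
  fixes e h :: "'a::unital_cstar_algebra"
  assumes e: "projection e" and h: "adj h = h" "e * h = h" "h * e = h" and small: "norm h \<le> 1/16"
  shows "\<exists>s. adj s = s \<and> e * s = s \<and> s * e = s \<and> norm (s - e) \<le> norm h \<and> s * (e - h) * s = e"
proof -
  define S where "S = {k. norm k \<le> 1/8 \<and> adj k = k \<and> e * k = k \<and> k * e = k \<and> k * h = h * k}"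
  have "closed S"
    unfolding S_def
    by (intro closed_Collect_conj closed_Collect_le closed_Collect_eq continuous_on_adj
        continuous_intros)
  have maps: "inv_sqrt_iter h k \<in> S" if "k \<in> S" for k
  proof -
    have k: "norm k \<le> 1/8" "adj k = k" "e * k = k" "k * e = k" "k * h = h * k"
      using that by (auto simp: S_def)
    have "norm (inv_sqrt_iter h k) \<le> 1/8"
      using norm_inv_sqrt_iter_le[OF small k(1)] small k(1) by linarith
    with inv_sqrt_iter_corner_commutant[OF h k(2-5)] show ?thesis
      by (simp add: S_def)
  qed
  have "\<exists>!k\<in>S. inv_sqrt_iter h k = k"
  proof (rule Banach_fix[of S "1/2"])
    show "S \<noteq> {}"
      by (auto simp: S_def intro!: exI[of _ 0])
    show "dist (inv_sqrt_iter h x) (inv_sqrt_iter h y) \<le> 1/2 * dist x y" if "x \<in> S" "y \<in> S" for x y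
      using that norm_inv_sqrt_iter_diff_le[OF small] by (simp add: S_def dist_norm)
  qed (use maps \<open>closed S\<close> complete_eq_closed in auto)
  then obtain k where "k \<in> S" and fixed: "inv_sqrt_iter h k = k"
    by blast
  then have k: "norm k \<le> 1/8" "adj k = k" "e * k = k" "k * e = k" "k * h = h * k"
    by (auto simp: S_def)
  have "norm k \<le> norm h / 2 + 33/256 * norm k"
    using norm_inv_sqrt_iter_le[OF small k(1)] fixed by simp
  then have "norm k \<le> norm h"
    using norm_ge_zero[of h] by linarith
  moreover have "(e + k) * (e - h) * (e + k) = e"
    using e k h by (intro inv_sqrt_iter_fixpoint[OF fixed]) (auto simp: projection_def)
  ultimately show ?thesis
    using e k by (intro exI[of _ "e + k"]) (auto simp: projection_def adj_add algebra_simps)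
qed

lemma exists_compression_inverse_sqrt:
  fixes e f :: "'a::unital_cstar_algebra"
  assumes e: "projection e" and f: "projection f" and close: "norm (e - f) \<le> 1/16"
  shows "\<exists>s. adj s = s \<and> e * s = s \<and> s * e = s \<and> norm (s - e) \<le> norm (e - f)
    \<and> s * (e * f * e) * s = e"
proof -
  note ec = projection_mult_cancel[OF e]
  define h where "h = e - e * f * e"
  have h: "adj h = h" "e * h = h" "h * e = h"
    using e f by (simp_all add: h_def adj_diff adj_mult projection_def algebra_simps ec mult.assoc)
  have "h = e * (e - f) * e"
    by (simp add: h_def algebra_simps ec)
  then have norm_h: "norm h \<le> norm (e - f)"
    using projection_norm_le_one[OF e]
    by (metis norm_mult_left_le_one norm_mult_right_le_one order_trans)
  with close have "norm h \<le> 1/16"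
    by linarith
  then obtain s where "adj s = s" "e * s = s" "s * e = s" "norm (s - e) \<le> norm h"
    "s * (e - h) * s = e"
    using exists_corner_inverse_sqrt[OF e h] by blast
  with norm_h show ?thesis
    by (intro exI[of _ s]) (auto simp: h_def)
qed

lemma eq_zero_of_mult_close:
  fixes g e f :: "'a::real_normed_algebra"
  assumes "g * f = g" "g * e = 0" "norm (e - f) < 1"
  shows "g = 0"
proof -
  have "g = g * (f - e)"
    using assms(1,2) by (simp add: right_diff_distrib)
  then have "norm g \<le> norm g * norm (e - f)"
    by (metis norm_mult_ineq norm_minus_commute)
  then have "norm g * (1 - norm (e - f)) \<le> 0"
    by (simp add: right_diff_distrib)
  with assms(3) have "norm g \<le> 0"
    by (simp add: mult_le_0_iff)
  then show ?thesis
    by simp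
qed

lemma close_projections_equivalent:
  fixes e f :: "'a::unital_cstar_algebra"
  assumes e: "projection e" and f: "projection f" and close: "norm (e - f) \<le> 1/16"
  shows "\<exists>v. adj v * v = e \<and> v * adj v = f \<and> norm (v - e) \<le> 2 * norm (e - f)"
proof -
  note ec = projection_mult_cancel[OF e] and fc = projection_mult_cancel[OF f]
  obtain s where s: "adj s = s" "e * s = s" "s * e = s" "norm (s - e) \<le> norm (e - f)"
    and inv_sqrt: "s * (e * f * e) * s = e"
    using exists_compression_inverse_sqrt[OF e f close] by blast
  define v where "v = f * e * s"
  have adj_v: "adj v = s * e * f"
    using e f by (simp add: v_def adj_mult s projection_def mult.assoc)
  have "adj v * v = s * (e * (f * f) * e) * s"
    unfolding adj_v by (simp add: v_def mult.assoc)
  with inv_sqrt have source: "adj v * v = e"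
    by (simp add: fc)
  define g where "g = f - v * adj v"
  have g_f: "g * f = g"
    by (simp add: g_def algebra_simps adj_v fc mult.assoc)
  have g_v: "g * v = 0"
  proof -
    have "f * v = v" "v * e = v"
      by (simp_all add: v_def fc s mult.assoc)
    then show ?thesis
      by (simp add: g_def left_diff_distrib mult.assoc source)
  qed
  have "g * e = g * e * (s * (e * f * e) * s)"
    unfolding inv_sqrt by (simp add: mult.assoc ec)
  also have "\<dots> = (g * f * e * s) * (e * f * e * s)"
    using g_f by (simp add: mult.assoc)
  also have "\<dots> = 0"
    using g_v by (simp add: v_def mult.assoc)
  finally have "g = 0"
    using eq_zero_of_mult_close[OF g_f] close by simp
  then have range: "v * adj v = f"
    by (simp add: g_def)
  have "v - e = f * (s - e) + (f - e) * e"
    by (simp add: v_def algebra_simps s ec mult.assoc)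
  then have "norm (v - e) \<le> norm (f * (s - e)) + norm ((f - e) * e)"
    by (metis norm_triangle_ineq)
  also have "\<dots> \<le> norm (s - e) + norm (f - e)"
    by (intro add_mono norm_mult_left_le_one norm_mult_right_le_one projection_norm_le_one e f)
  finally have "norm (v - e) \<le> 2 * norm (e - f)"
    using s(4) by (simp add: norm_minus_commute)
  with source range show ?thesis
    by blast
qed

lemma projection_equivalent_of_unitary_conj_tendsto:
  fixes p q :: "'a::unital_cstar_algebra" and U :: "nat \<Rightarrow> 'a"
  assumes p: "projection p" and q: "projection q" and U: "\<And>n. unitary (U n)"
    and lim: "(\<lambda>n. norm (adj (U n) * p * U n - q)) \<longlonglongrightarrow> 0"
  shows "\<exists>w. adj w * w = p \<and> w * adj w = q"
proof -
  have "\<forall>\<^sub>F n in sequentially. norm (adj (U n) * p * U n - q) < 1/16"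
    using order_tendstoD(2)[OF lim, of "1/16"] by simp
  then obtain k where close: "norm (adj (U k) * p * U k - q) \<le> 1/16"
    using eventually_happens'[OF sequentially_bot] less_imp_le by blast
  define a where "a = adj (U k) * p"
  have a: "adj a * a = p" "a * adj a = adj (U k) * p * U k"
    using p U[of k] by (simp_all add: a_def adj_mult adj_adj projection_def mult.assoc
        unitary_mult_cancel projection_mult_cancel)
  obtain v where v: "adj v * v = adj (U k) * p * U k" "v * adj v = q"
    using close_projections_equivalent[OF projection_unitary_conj[OF p U] q close] by blast
  have "adj (v * a) * (v * a) = p" "(v * a) * adj (v * a) = q"
    using partial_isometry_mult[of v a] p q by (simp_all add: a v)
  then show ?thesis
    by blast
qed

lemma norm_sandwich_diff_le:
  fixes f w b a p :: "'a::real_normed_algebra"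
  assumes "f * w = w" "norm w \<le> 1" "norm a \<le> 1"
  shows "norm (b * (w * a) - w) \<le> norm (b - f) + norm (a - p) + norm (w * p - w)"
proof -
  have "b * (w * a) - w = (b - f) * w * a + w * (a - p) + (w * p - w)"
    using assms(1) by (simp add: algebra_simps mult.assoc)
  then have "norm (b * (w * a) - w) \<le> norm ((b - f) * w * a) + norm (w * (a - p)) + norm (w * p - w)"
    by (metis norm_triangle_3)
  also have "\<dots> \<le> norm (b - f) + norm (a - p) + norm (w * p - w)"
    using assms(2,3) by (intro add_mono norm_mult_left_le_one norm_mult_right_le_one
        order_trans[OF norm_mult_right_le_one] order_refl)
  finally show ?thesis .
qed

lemma conj_close_projections_partial_isometry:
  fixes p q u v :: "'a::unital_cstar_algebra"
  assumes p: "projection p" and q: "projection q" and u: "unitary u" and v: "unitary v"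
    and comm: "norm (p * u - u * p) \<le> 1/16" and close: "norm (adj v * p * v - q) \<le> 1/16"
  shows "\<exists>w. adj w * w = p \<and> w * adj w = q \<and>
    norm (w - adj v * p * u) \<le> 3 * norm (p * u - u * p) + 2 * norm (adj v * p * v - q)"
proof -
  note uc = unitary_mult_cancel[OF u] unitary_mult_cancel[OF v]
  note pc = projection_mult_cancel[OF p]
  define E where "E = adj u * p * u"
  define F where "F = adj v * p * v"
  define w0 where "w0 = adj v * p * u"
  have E: "projection E" and F: "projection F"
    unfolding E_def F_def using p u v by (simp_all add: projection_unitary_conj)
  have w0: "adj w0 * w0 = E" "w0 * adj w0 = F" "F * w0 = w0"
    using p by (simp_all add: E_def F_def w0_def adj_mult adj_adj projection_def mult.assoc uc pc)
  have "E - p = adj u * (p * u - u * p)"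
    by (simp add: E_def algebra_simps uc mult.assoc)
  then have p_E: "norm (p - E) \<le> norm (p * u - u * p)"
    by (simp add: norm_minus_commute[of p] norm_mult_left_le_one norm_unitary_le_one unitary_adj u)
  obtain VE where VE: "adj VE * VE = p" "VE * adj VE = E" "norm (VE - p) \<le> 2 * norm (p - E)"
    using close_projections_equivalent[OF p E] p_E comm by fastforce
  obtain VF where VF: "adj VF * VF = F" "VF * adj VF = q" "norm (VF - F) \<le> 2 * norm (F - q)"
    using close_projections_equivalent[OF F q] close by (auto simp: F_def)
  have "adj (w0 * VE) * (w0 * VE) = p" "(w0 * VE) * adj (w0 * VE) = F"
    using partial_isometry_mult[of w0 VE] p F by (simp_all add: VE w0)
  then have w: "adj (VF * (w0 * VE)) * (VF * (w0 * VE)) = p"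
      "(VF * (w0 * VE)) * adj (VF * (w0 * VE)) = q"
    using partial_isometry_mult[of VF "w0 * VE"] p q by (simp_all add: VF)
  have "w0 * p - w0 = adj v * p * (u * p - p * u)"
    by (simp add: w0_def algebra_simps mult.assoc pc)
  then have "norm (w0 * p - w0) \<le> norm (u * p - p * u)"
    using norm_mult_left_le_one[of "adj v * p"] p v p[unfolded projection_def]
    by (simp add: partial_isometry_norm_le_one partial_isometry_def adj_mult
        adj_adj mult.assoc uc pc)
  moreover have "norm w0 \<le> 1" "norm VE \<le> 1"
    using E p by (simp_all add: partial_isometry_norm_le_one partial_isometry_def w0 VE)
  ultimately have "norm (VF * (w0 * VE) - w0) \<le> 3 * norm (p * u - u * p) + 2 * norm (F - q)"
    using norm_sandwich_diff_le[of F w0 VE VF p] w0(3) VE(3) VF(3) p_E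
      norm_minus_commute[of "u * p" "p * u"] by linarith
  with w show ?thesis
    unfolding F_def w0_def by blast
qed

lemma norm_commutator_perturb:
  fixes w w0 a :: "'a::real_normed_algebra"
  shows "norm (w * a - a * w) \<le> norm (w0 * a - a * w0) + 2 * norm a * norm (w - w0)"
proof -
  have "w * a - a * w = (w0 * a - a * w0) + (w - w0) * a + a * (w0 - w)"
    by (simp add: algebra_simps)
  then have "norm (w * a - a * w) \<le> norm (w0 * a - a * w0) + norm ((w - w0) * a) + norm (a * (w0 - w))"
    by (metis norm_triangle_3)
  also have "\<dots> \<le> norm (w0 * a - a * w0) + norm (w - w0) * norm a + norm a * norm (w0 - w)"
    by (intro add_mono norm_mult_ineq order_refl)
  finally show ?thesis
    by (simp add: algebra_simps norm_minus_commute)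
qed

lemma norm_commutator_conj_le:
  fixes u v p a c :: "'a::unital_cstar_algebra"
  assumes u: "unitary u" and v: "unitary v" and p: "projection p"
  shows "norm ((adj v * p * u) * a - a * (adj v * p * u))
    \<le> norm (u * a * adj u - c) + norm (p * c - c * p) + norm (v * a * adj v - c)"
proof -
  have "(adj v * p * u) * a - a * (adj v * p * u)
      = adj v * (p * (u * a * adj u - c) + (p * c - c * p) + (c - v * a * adj v) * p) * u"
    by (simp add: algebra_simps unitary_mult_cancel[OF u] unitary_mult_cancel[OF v] mult.assoc)
  also have "norm \<dots> \<le> norm (p * (u * a * adj u - c) + (p * c - c * p) + (c - v * a * adj v) * p)"
    using norm_mult_right_le_one[OF norm_unitary_le_one[OF u]]
      norm_mult_left_le_one[OF norm_unitary_le_one[OF unitary_adj[OF v]]]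
    by (meson order_trans)
  also have "\<dots> \<le> norm (u * a * adj u - c) + norm (p * c - c * p) + norm (v * a * adj v - c)"
    using projection_norm_le_one[OF p]
    by (intro order_trans[OF norm_triangle_3] add_mono norm_mult_left_le_one order_refl)
      (simp_all add: norm_mult_right_le_one flip: norm_minus_commute)
  finally show ?thesis .
qed

lemma diagonal_tendsto_zero_of_rows:
  fixes c :: "nat \<Rightarrow> nat \<Rightarrow> real"
  assumes rows: "\<And>m. (\<lambda>j. c m j) \<longlonglongrightarrow> 0"
  shows "\<exists>r. filterlim r at_top sequentially \<and> (\<lambda>j. c (r j) j) \<longlonglongrightarrow> 0"
proof -
  have "\<exists>N. \<forall>j\<ge>N. norm (c m j) < inverse (real (Suc m))" for m
  proof -
    have "inverse (real (Suc m)) > 0"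
      by simp
    then show ?thesis
      using rows[of m] unfolding LIMSEQ_iff by simp
  qed
  then obtain N where N: "\<And>m j. j \<ge> N m \<Longrightarrow> norm (c m j) < inverse (real (Suc m))"
    by metis
  define r where "r j = Max (insert 0 {m. m \<le> j \<and> N m \<le> j})" for j
  have finite: "finite (insert 0 {m. m \<le> j \<and> N m \<le> j})" for j
    by (rule finite_subset[of _ "{..j}"]) auto
  have r_ge: "m \<le> r j" if "m \<le> j" "N m \<le> j" for j m
    unfolding r_def by (rule Max_ge[OF finite]) (use that in auto)
  have N_r: "N (r j) \<le> j" if "N 0 \<le> j" for j
    using Max_in[OF finite, of j] that by (auto simp: r_def)
  have r: "filterlim r at_top sequentially"
    unfolding filterlim_at_top eventually_sequentially
  proof
    fix m
    show "\<exists>J. \<forall>j\<ge>J. m \<le> r j"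
      using r_ge by (intro exI[of _ "max m (N m)"]) simp
  qed
  have "\<forall>\<^sub>F j in sequentially. norm (c (r j) j) \<le> inverse (real (Suc (r j)))"
    unfolding eventually_sequentially using N N_r less_imp_le by blast
  moreover have "(\<lambda>j. inverse (real (Suc (r j)))) \<longlonglongrightarrow> 0"
    using filterlim_compose[OF LIMSEQ_inverse_real_of_nat r] by simp
  ultimately have "(\<lambda>j. c (r j) j) \<longlonglongrightarrow> 0"
    by (rule Lim_null_comparison)
  with r show ?thesis
    by blast
qed

lemma diagonal_tendsto_zero_of_columns:
  fixes c :: "nat \<Rightarrow> nat \<Rightarrow> real"
  assumes columns: "\<And>j. (\<lambda>n. c n j) \<longlonglongrightarrow> 0"
  shows "\<exists>r. filterlim r at_top sequentially \<and> (\<lambda>j. c (r j) j) \<longlonglongrightarrow> 0"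
proof -
  have "\<exists>n\<ge>j. norm (c n j) < inverse (real (Suc j))" for j
  proof -
    have "inverse (real (Suc j)) > 0"
      by simp
    then obtain N where "\<forall>n\<ge>N. norm (c n j) < inverse (real (Suc j))"
      using columns[of j] unfolding LIMSEQ_iff by (simp only: diff_zero) blast
    then show ?thesis
      by (intro exI[of _ "max N j"]) simp
  qed
  then obtain r where r: "\<And>j. r j \<ge> j" "\<And>j. norm (c (r j) j) < inverse (real (Suc j))"
    by metis
  have "filterlim r at_top sequentially"
    unfolding filterlim_at_top eventually_sequentially using r(1) le_trans by blast
  moreover have "(\<lambda>j. c (r j) j) \<longlonglongrightarrow> 0"
    by (intro Lim_null_comparison[OF always_eventually LIMSEQ_inverse_real_of_nat] allI
        less_imp_le, rule r(2))
  ultimately show ?thesis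
    by blast
qed

lemma central_sequence_perturb:
  fixes w w0 :: "nat \<Rightarrow> 'a::unital_cstar_algebra"
  assumes central: "central_sequence w0" and lim: "(\<lambda>j. norm (w j - w0 j)) \<longlonglongrightarrow> 0"
  shows "central_sequence w"
  unfolding central_sequence_def
proof
  fix a
  have bound: "(\<lambda>j. norm (w0 j * a - a * w0 j) + 2 * norm a * norm (w j - w0 j)) \<longlonglongrightarrow> 0"
    using central unfolding central_sequence_def
    by (intro tendsto_add_zero tendsto_mult_right_zero lim) blast
  show "(\<lambda>j. norm (w j * a - a * w j)) \<longlonglongrightarrow> 0"
    by (rule Lim_null_comparison[OF always_eventually bound]) (simp add: norm_commutator_perturb)
qed

lemma central_sequence_conj:
  fixes p u v :: "nat \<Rightarrow> 'a::unital_cstar_algebra"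
  assumes p: "\<And>j. projection (p j)" and central: "central_sequence p"
    and u: "\<And>j. unitary (u j)" and v: "\<And>j. unitary (v j)"
    and conj: "\<And>a. \<exists>c. (\<lambda>j. norm (u j * a * adj (u j) - c)) \<longlonglongrightarrow> 0
                    \<and> (\<lambda>j. norm (v j * a * adj (v j) - c)) \<longlonglongrightarrow> 0"
  shows "central_sequence (\<lambda>j. adj (v j) * p j * u j)"
  unfolding central_sequence_def
proof
  fix a
  obtain c where cu: "(\<lambda>j. norm (u j * a * adj (u j) - c)) \<longlonglongrightarrow> 0"
    and cv: "(\<lambda>j. norm (v j * a * adj (v j) - c)) \<longlonglongrightarrow> 0"
    using conj by blast
  have bound: "(\<lambda>j. norm (u j * a * adj (u j) - c) + norm (p j * c - c * p j)
      + norm (v j * a * adj (v j) - c)) \<longlonglongrightarrow> 0"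
    using central unfolding central_sequence_def by (intro tendsto_add_zero cu cv) blast
  show "(\<lambda>j. norm ((adj (v j) * p j * u j) * a - a * (adj (v j) * p j * u j))) \<longlonglongrightarrow> 0"
    by (rule Lim_null_comparison[OF always_eventually bound]) (simp add: norm_commutator_conj_le u v p)
qed

lemma central_partial_isometries_of_conj:
  fixes p q u v :: "nat \<Rightarrow> 'a::unital_cstar_algebra"
  assumes p: "\<And>j. projection (p j)" and q: "\<And>j. projection (q j)"
    and central: "central_sequence p"
    and u: "\<And>j. unitary (u j)" and v: "\<And>j. unitary (v j)"
    and comm: "(\<lambda>j. norm (p j * u j - u j * p j)) \<longlonglongrightarrow> 0"
    and close: "(\<lambda>j. norm (adj (v j) * p j * v j - q j)) \<longlonglongrightarrow> 0"
    and conj: "\<And>a. \<exists>c. (\<lambda>j. norm (u j * a * adj (u j) - c)) \<longlonglongrightarrow> 0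
                    \<and> (\<lambda>j. norm (v j * a * adj (v j) - c)) \<longlonglongrightarrow> 0"
    and equivalent: "\<And>j. \<exists>w. adj w * w = p j \<and> w * adj w = q j"
  shows "\<exists>w. central_sequence w \<and> (\<forall>j. adj (w j) * w j = p j \<and> w j * adj (w j) = q j)"
proof -
  define w0 where "w0 j = adj (v j) * p j * u j" for j
  define err where
    "err j = 3 * norm (p j * u j - u j * p j) + 2 * norm (adj (v j) * p j * v j - q j)" for j
  \<comment> \<open>Only finitely many j violate err j \<le> 1/16; for them any partial isometry will do.\<close>
  have "\<exists>w. adj w * w = p j \<and> w * adj w = q j \<and> (err j \<le> 1/16 \<longrightarrow> norm (w - w0 j) \<le> err j)"
    for j
  proof (cases "err j \<le> 1/16")
    case True
    then have "norm (p j * u j - u j * p j) \<le> 1/16" "norm (adj (v j) * p j * v j - q j) \<le> 1/16"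
      using norm_ge_zero[of "p j * u j - u j * p j"] norm_ge_zero[of "adj (v j) * p j * v j - q j"]
      unfolding err_def by linarith+
    then obtain w where "adj w * w = p j" "w * adj w = q j" "norm (w - w0 j) \<le> err j"
      using conj_close_projections_partial_isometry[OF p q u v] unfolding w0_def err_def by blast
    then show ?thesis
      by blast
  qed (use equivalent in blast)
  then obtain w where w: "\<And>j. adj (w j) * w j = p j" "\<And>j. w j * adj (w j) = q j"
    and w_w0: "\<And>j. err j \<le> 1/16 \<Longrightarrow> norm (w j - w0 j) \<le> err j"
    by metis
  have err: "err \<longlonglongrightarrow> 0"
    unfolding err_def by (intro tendsto_add_zero tendsto_mult_right_zero comm close)
  then have "\<forall>\<^sub>F j in sequentially. err j \<le> 1/16"
    using order_tendstoD(2)[OF err, of "1/16"] by (auto elim: eventually_mono)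
  then have "(\<lambda>j. norm (w j - w0 j)) \<longlonglongrightarrow> 0"
    by (rule Lim_null_comparison[OF eventually_mono err]) (simp add: w_w0)
  then have "central_sequence w"
    using central_sequence_perturb central_sequence_conj[OF p central u v conj]
    unfolding w0_def by blast
  with w show ?thesis
    by blast
qed

lemma tendsto_unitary_conj_inv_automorphism:
  fixes \<alpha> :: "'a::unital_cstar_algebra \<Rightarrow> 'a" and U :: "nat \<Rightarrow> 'a"
  assumes \<alpha>: "is_automorphism \<alpha>" and U: "\<And>n. unitary (U n)"
    and inner: "\<And>a. (\<lambda>n. norm (adj (U n) * a * U n - \<alpha> a)) \<longlonglongrightarrow> 0"
  shows "(\<lambda>n. norm (U n * a * adj (U n) - inv \<alpha> a)) \<longlonglongrightarrow> 0"
proof (rule Lim_null_comparison[OF always_eventually inner[of "inv \<alpha> a"]], intro allI)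
  fix n
  have a: "\<alpha> (inv \<alpha> a) = a"
    using \<alpha> by (simp add: is_automorphism_def bij_is_surj surj_f_inv_f)
  have "U n * a * adj (U n) - inv \<alpha> a = U n * (a - adj (U n) * inv \<alpha> a * U n) * adj (U n)"
    by (simp add: algebra_simps unitary_mult_cancel[OF U] mult.assoc)
  also have "norm \<dots> \<le> norm (a - adj (U n) * inv \<alpha> a * U n)"
    using norm_mult_left_le_one[OF norm_unitary_le_one[OF U]]
      norm_mult_right_le_one[OF norm_unitary_le_one[OF unitary_adj[OF U]]]
    by (meson order_trans)
  finally show "norm (norm (U n * a * adj (U n) - inv \<alpha> a))
      \<le> norm (adj (U n) * inv \<alpha> a * U n - \<alpha> (inv \<alpha> a))"
    by (simp add: a norm_minus_commute)
qed

lemma automorphism_projection: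
  assumes "is_automorphism \<alpha>" and p: "projection p"
  shows "projection (\<alpha> p)"
proof -
  have "\<alpha> (adj p) = adj (\<alpha> p)" "\<alpha> (p * p) = \<alpha> p * \<alpha> p"
    using assms(1) by (simp_all add: is_automorphism_def)
  with p show ?thesis
    by (simp add: projection_def)
qed

theorem lemma3p1:
  fixes \<alpha> :: "'a::unital_cstar_algebra \<Rightarrow> 'a"
    and p :: "nat \<Rightarrow> 'a"
  assumes "separable_space TYPE('a)"
    and "is_automorphism \<alpha>"
    and "approximately_inner \<alpha>"
    and "\<forall>j. projection (p j)"
    and "central_sequence p"
  shows "\<exists>w :: nat \<Rightarrow> 'a. central_sequence w \<and> (\<forall>j. partial_isometry (w j))
           \<and> (\<forall>j. adj (w j) * w j = p j \<and> w j * adj (w j) = \<alpha> (p j))"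
proof -
  obtain U where U: "\<And>n. unitary (U n)"
    and inner: "\<And>a. (\<lambda>n. norm (adj (U n) * a * U n - \<alpha> a)) \<longlonglongrightarrow> 0"
    using assms(3) unfolding approximately_inner_def by blast
  have p: "\<And>j. projection (p j)" and \<alpha>p: "\<And>j. projection (\<alpha> (p j))"
    using assms(2,4) automorphism_projection by blast+
  obtain m where m: "filterlim m at_top sequentially"
    and comm: "(\<lambda>j. norm (p j * U (m j) - U (m j) * p j)) \<longlonglongrightarrow> 0"
    using diagonal_tendsto_zero_of_rows[of "\<lambda>m j. norm (p j * U m - U m * p j)"] assms(5)
    unfolding central_sequence_def by blast
  obtain n where n: "filterlim n at_top sequentially"
    and close: "(\<lambda>j. norm (adj (U (n j)) * p j * U (n j) - \<alpha> (p j))) \<longlonglongrightarrow> 0"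
    using diagonal_tendsto_zero_of_columns[of "\<lambda>n j. norm (adj (U n) * p j * U n - \<alpha> (p j))"] inner
    by blast
  have conj: "\<exists>c. (\<lambda>j. norm (U (m j) * a * adj (U (m j)) - c)) \<longlonglongrightarrow> 0
      \<and> (\<lambda>j. norm (U (n j) * a * adj (U (n j)) - c)) \<longlonglongrightarrow> 0" for a
    using tendsto_unitary_conj_inv_automorphism[OF assms(2) U inner] filterlim_compose m n
    by blast
  obtain w where "central_sequence w" "\<And>j. adj (w j) * w j = p j" "\<And>j. w j * adj (w j) = \<alpha> (p j)"
    using central_partial_isometries_of_conj[OF p \<alpha>p assms(5) U U comm close conj
        projection_equivalent_of_unitary_conj_tendsto[OF p \<alpha>p U inner]]
    by blast
  then show ?thesis
    using p by (auto simp: partial_isometry_def)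
qed

end
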